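(* Under the direct FIFO mechanism, when all drivers use the equilibrium strategy of Theorem 1 (accept all dispatches, join iff the queue length is at most $\bar Q$, never leave or move to the tail): if $\lambda>\sum_{i\in\mathcal L}\mu_i$, the steady-state queue length is $Q^*=\bar Q$, this is the unique steady-state length, all trips are completed, and every arriving driver has payoff $0$; if $\lambda\le\sum_{i\in\mathcal L}\mu_i$, then $Q^*=n_{j^*}$ is a steady-state queue length (unique when $\lambda\ne\sum_{j=1}^i\mu_j$ for all $i\in\mathcal L$), all trips to locations $i<j^*$ and $\lambda-\sum_{i<j^*}\mu_i$ units per unit time of trips to $j^*$ are completed, and every arriving driver has payoff $w_{j^*}$.
   Context: Model: continuous time, non-atomic, stationary; one origin with a queue. Destinations $\mathcal L=\{1,\dots,\ell\}$, rider arrival rates $\mu_i>0$, driver arrival rate $\lambda>0$, net earnings $w_1>\dots>w_\ell\ge0$ (0 for not joining or leaving without a rider), driver waiting cost $c>0$ per unit time. Queue positions $q\in[0,Q]$, $q=0$ head. Notation: $j^*=\max\{i\in\mathcal L:\lambda>\sum_{j<i}\mu_j\}$; $n_1=0$, $n_i=\sum_{j<i}(w_j-w_i)\mu_j/c$; $\bar Q=\sum_i w_i\mu_i/c$. Direct FIFO: when the queue length $Q\ge n_i$, a trip to $i$ is offered first to the driver at position $n_i$ and after each decline to the next driver further down the queue; when $Q<n_i$ it is not dispatched. A steady-state queue length is one at which the rate of drivers joining equals the rate of drivers dispatched from the queue. *)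

theory Defs
  imports "HOL-Analysis.Analysis"
begin

text \<open>Model parameters: destinations 1..l, rider arrival rates mu i, net earnings w i,
driver arrival rate lam, waiting cost c per unit time.\<close>

definition nthr :: "(nat \<Rightarrow> real) \<Rightarrow> (nat \<Rightarrow> real) \<Rightarrow> real \<Rightarrow> nat \<Rightarrow> real" where
  "nthr mu w c i = (\<Sum>j\<in>{1..<i}. (w j - w i) * mu j) / c"

definition Qbar :: "nat \<Rightarrow> (nat \<Rightarrow> real) \<Rightarrow> (nat \<Rightarrow> real) \<Rightarrow> real \<Rightarrow> real" where
  "Qbar l mu w c = (\<Sum>i\<in>{1..l}. w i * mu i) / c"

definition jstar :: "nat \<Rightarrow> (nat \<Rightarrow> real) \<Rightarrow> real \<Rightarrow> nat" where
  "jstar l mu lam = Max {i\<in>{1..l}. lam > (\<Sum>j\<in>{1..<i}. mu j)}"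

text \<open>Stationary flow profile under direct FIFO when all drivers use the equilibrium
strategy (accept every dispatch, join iff the queue length is at most Qbar, never leave or
move to the tail).  Q is the queue length, r the rate at which drivers join, and x i the
rate at which trips to i are dispatched (and completed).  A trip to i is dispatched iff
Q >= n_i; in the fluid steady state a queue sitting exactly at a threshold may dispatch
(resp. admit) only part of the flow, which is captured by the interval constraints.\<close>
definition steady_profile ::
  "nat \<Rightarrow> (nat \<Rightarrow> real) \<Rightarrow> (nat \<Rightarrow> real) \<Rightarrow> real \<Rightarrow> real \<Rightarrow> real \<Rightarrow> real \<Rightarrow> (nat \<Rightarrow> real) \<Rightarrow> bool" where
  "steady_profile l mu w lam c Q r x \<longleftrightarrow>
     0 \<le> Q \<and>
     (Q < Qbar l mu w c \<longrightarrow> r = lam) \<and>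
     (Q = Qbar l mu w c \<longrightarrow> 0 \<le> r \<and> r \<le> lam) \<and>
     (Q > Qbar l mu w c \<longrightarrow> r = 0) \<and>
     (\<forall>i\<in>{1..l}.
        (Q < nthr mu w c i \<longrightarrow> x i = 0) \<and>
        (Q > nthr mu w c i \<longrightarrow> x i = mu i) \<and>
        (Q = nthr mu w c i \<longrightarrow> 0 \<le> x i \<and> x i \<le> mu i)) \<and>
     r = (\<Sum>i\<in>{1..l}. x i)"

definition steady_length ::
  "nat \<Rightarrow> (nat \<Rightarrow> real) \<Rightarrow> (nat \<Rightarrow> real) \<Rightarrow> real \<Rightarrow> real \<Rightarrow> real \<Rightarrow> bool" where
  "steady_length l mu w lam c Q \<longleftrightarrow> (\<exists>r x. steady_profile l mu w lam c Q r x)"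

text \<open>Speed at which a driver at position q moves towards the head: the rate at which
drivers ahead of q (at positions n_i < q) are dispatched.\<close>
definition drift_speed ::
  "nat \<Rightarrow> (nat \<Rightarrow> real) \<Rightarrow> (nat \<Rightarrow> real) \<Rightarrow> real \<Rightarrow> (nat \<Rightarrow> real) \<Rightarrow> real \<Rightarrow> real" where
  "drift_speed l mu w c x q = (\<Sum>i\<in>{i\<in>{1..l}. nthr mu w c i < q}. x i)"

text \<open>Time needed to move from position Q (the tail) to position p.\<close>
definition travel_time ::
  "nat \<Rightarrow> (nat \<Rightarrow> real) \<Rightarrow> (nat \<Rightarrow> real) \<Rightarrow> real \<Rightarrow> (nat \<Rightarrow> real) \<Rightarrow> real \<Rightarrow> real \<Rightarrow> real" where
  "travel_time l mu w c x Q p = integral {p..Q} (\<lambda>q. 1 / drift_speed l mu w c x q)"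

text \<open>Every arriving driver has payoff pi: a driver who joins at the tail and is
dispatched the trip to i (at position n_i, possible iff x i > 0) gets
w_i - c * (waiting time); a driver who does not join (possible iff r < lam) gets 0.\<close>
definition all_payoff ::
  "nat \<Rightarrow> (nat \<Rightarrow> real) \<Rightarrow> (nat \<Rightarrow> real) \<Rightarrow> real \<Rightarrow> real \<Rightarrow> real \<Rightarrow> real \<Rightarrow> (nat \<Rightarrow> real) \<Rightarrow> real \<Rightarrow> bool" where
  "all_payoff l mu w lam c Q r x pay \<longleftrightarrow>
     (\<forall>i\<in>{1..l}. 0 < x i \<longrightarrow> w i - c * travel_time l mu w c x Q (nthr mu w c i) = pay) \<and>
     (r < lam \<longrightarrow> pay = 0)"

end

theory Submission
  imports Defs
begin

text \<open>Write \<open>cum k = mu 1 + ... + mu (k-1)\<close>. The dispatch thresholds \<open>thr k\<close> satisfy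
  \<open>thr (k+1) - thr k = (w k - w (k+1)) * cum (k+1) / c\<close> and \<open>Qbar - thr l = w l * cum (l+1) / c\<close>, so they
  increase up to \<open>Qbar\<close>. A queue of length \<open>Q\<close> with \<open>thr k \<le> Q < thr (k+1)\<close> dispatches all trips to
  destinations below \<open>k\<close> and part of those to \<open>k\<close>, at total rate between \<open>cum k\<close> and \<open>cum (k+1)\<close>.
  Balancing this against the joining rate forces \<open>Q = Qbar\<close> when drivers exceed total demand, and
  otherwise singles out \<open>Q = thr j*\<close> unless \<open>lam\<close> hits some \<open>cum (k+1)\<close> exactly. For the payoffs, a driver crosses \<open>(thr m, thr (m+1)]\<close> at speed \<open>cum (m+1)\<close>, so
  the waiting cost of that stretch is \<open>w m - w (m+1)\<close>; these telescope, and every driver who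
  is served ends up with the earnings of the marginal destination (or with \<open>0\<close> at \<open>Qbar\<close>).\<close>

lemma has_integral_piecewise_constant:
  fixes t v :: "nat \<Rightarrow> real" and f :: "real \<Rightarrow> real"
  assumes "i \<le> J"
    and mono: "\<And>k. i \<le> k \<Longrightarrow> k < J \<Longrightarrow> t k \<le> t (Suc k)"
    and const: "\<And>k q. i \<le> k \<Longrightarrow> k < J \<Longrightarrow> t k < q \<Longrightarrow> q \<le> t (Suc k) \<Longrightarrow> f q = v k"
  shows "(f has_integral (\<Sum>k\<in>{i..<J}. (t (Suc k) - t k) * v k)) {t i..t J}"
proof -
  have "t i \<le> t J \<and> (f has_integral (\<Sum>k\<in>{i..<J}. (t (Suc k) - t k) * v k)) {t i..t J}"
    using assms(1)
  proof (induction J rule: dec_induct)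
    case base
    then show ?case by (simp add: has_integral_refl)
  next
    case (step J)
    have le: "t J \<le> t (Suc J)" using mono step by auto
    have "((\<lambda>q. v J) has_integral (t (Suc J) - t J) * v J) {t J..t (Suc J)}"
      using has_integral_const_real[of "v J" "t J" "t (Suc J)"] le by (simp add: mult.commute)
    then have last: "(f has_integral (t (Suc J) - t J) * v J) {t J..t (Suc J)}"
      by (rule has_integral_spike_finite[of "{t J}", rotated 2]) (use const step in auto)
    have "(f has_integral (\<Sum>k\<in>{i..<J}. (t (Suc k) - t k) * v k) + (t (Suc J) - t J) * v J)
        {t i..t (Suc J)}"
      by (rule has_integral_combine) (use step le last in auto)
    then show ?case using step le by simp
  qed
  then show ?thesis ..
qed

locale fifo_market =
  fixes l :: nat and mu w :: "nat \<Rightarrow> real" and c :: real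
  assumes l_pos: "1 \<le> l"
    and mu_pos: "\<And>i. 1 \<le> i \<Longrightarrow> i \<le> l \<Longrightarrow> 0 < mu i"
    and c_pos: "0 < c"
    and w_decreasing: "\<And>i j. 1 \<le> i \<Longrightarrow> i < j \<Longrightarrow> j \<le> l \<Longrightarrow> w j < w i"
    and w_last_nonneg: "0 \<le> w l"
begin

abbreviation thr :: "nat \<Rightarrow> real" where "thr \<equiv> nthr mu w c"
abbreviation cum :: "nat \<Rightarrow> real" where "cum k \<equiv> \<Sum>j\<in>{1..<k}. mu j"
abbreviation Qb :: real where "Qb \<equiv> Qbar l mu w c"

subsection \<open>Cumulative rider rates and dispatch thresholds\<close>

lemma cum_Suc: "1 \<le> k \<Longrightarrow> cum (Suc k) = cum k + mu k"
  by (simp add: sum.atLeastLessThan_Suc)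

lemma cum_Suc_pos: "1 \<le> k \<Longrightarrow> k \<le> l \<Longrightarrow> 0 < cum (Suc k)"
  by (rule sum_pos) (use mu_pos in auto)

lemma cum_mono: "a \<le> b \<Longrightarrow> b \<le> Suc l \<Longrightarrow> cum a \<le> cum b"
  by (rule sum_mono2) (auto intro!: less_imp_le[OF mu_pos])

lemma total_rate_eq_cum: "(\<Sum>i\<in>{1..l}. mu i) = cum (Suc l)"
  by (simp add: atLeastLessThanSuc_atLeastAtMost)

lemma thr_one: "thr 1 = 0"
  by (simp add: nthr_def)

lemma thr_Suc: "thr (Suc k) = thr k + (w k - w (Suc k)) * cum (Suc k) / c"
proof (cases "k = 0")
  case True
  then show ?thesis by (simp add: nthr_def)
next
  case False
  have "(\<Sum>j\<in>{1..<Suc k}. (w j - w (Suc k)) * mu j)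
      = (\<Sum>j\<in>{1..<Suc k}. (w j - w k) * mu j) + (w k - w (Suc k)) * cum (Suc k)"
    by (simp add: sum_distrib_left algebra_simps flip: sum.distrib)
  also have "(\<Sum>j\<in>{1..<Suc k}. (w j - w k) * mu j) = (\<Sum>j\<in>{1..<k}. (w j - w k) * mu j)"
    using False by (simp add: sum.atLeastLessThan_Suc)
  finally show ?thesis using c_pos by (simp add: nthr_def field_simps)
qed

lemma thr_strict_mono:
  assumes "1 \<le> i" "i < j" "j \<le> l"
  shows "thr i < thr j"
proof -
  have "1 \<le> i \<longrightarrow> j \<le> l \<longrightarrow> thr i < thr j"
    using \<open>i < j\<close>
  proof (induction i j rule: less_Suc_induct)
    case (1 k)
    have "0 < (w k - w (Suc k)) * cum (Suc k) / c" if "1 \<le> k" "Suc k \<le> l"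
      using w_decreasing[of k "Suc k"] cum_Suc_pos[of k] c_pos that by simp
    then show ?case using thr_Suc[of k] by simp
  next
    case (2 i j k)
    then show ?case by fastforce
  qed
  then show ?thesis using assms by simp
qed

lemma thr_mono: "1 \<le> i \<Longrightarrow> i \<le> j \<Longrightarrow> j \<le> l \<Longrightarrow> thr i \<le> thr j"
  using thr_strict_mono[of i j] by (cases "i = j") auto

lemma Qbar_minus_thr_last: "Qb - thr l = w l * cum (Suc l) / c"
proof -
  have last_term: "(\<Sum>i\<in>{1..l}. w i * mu i) = (\<Sum>i\<in>{1..<l}. w i * mu i) + w l * mu l"
    using l_pos by (simp add: atLeastLessThanSuc_atLeastAtMost[symmetric] sum.atLeastLessThan_Suc)
  have "Qb - thr l = ((\<Sum>i\<in>{1..l}. w i * mu i) - (\<Sum>j\<in>{1..<l}. (w j - w l) * mu j)) / c"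
    by (simp add: Qbar_def nthr_def diff_divide_distrib)
  also have "(\<Sum>i\<in>{1..l}. w i * mu i) - (\<Sum>j\<in>{1..<l}. (w j - w l) * mu j) = w l * cum (Suc l)"
    unfolding last_term using cum_Suc[of l] l_pos
    by (simp add: left_diff_distrib sum_subtractf sum_distrib_left algebra_simps)
  finally show ?thesis .
qed

lemma thr_le_Qbar: "1 \<le> i \<Longrightarrow> i \<le> l \<Longrightarrow> thr i \<le> Qb"
proof -
  have "0 \<le> w l * cum (Suc l) / c"
    using w_last_nonneg cum_Suc_pos[of l] l_pos c_pos by simp
  then show "1 \<le> i \<Longrightarrow> i \<le> l \<Longrightarrow> thr i \<le> Qb"
    using Qbar_minus_thr_last thr_mono[of i l] by simp
qed

lemma thr_less_Qbar: "1 \<le> i \<Longrightarrow> i < l \<Longrightarrow> thr i < Qb"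
  using thr_strict_mono[of i l] thr_le_Qbar[of l] l_pos by simp

lemma thr_bracket:
  assumes "0 \<le> Q"
  obtains k where "1 \<le> k" "k \<le> l" "thr k \<le> Q" "k < l \<Longrightarrow> Q < thr (Suc k)"
proof -
  define K where "K = {m\<in>{1..l}. thr m \<le> Q}"
  have "finite K" "1 \<in> K"
    unfolding K_def using l_pos thr_one assms by auto
  then have "Max K \<in> K" and above: "\<And>m. m \<in> K \<Longrightarrow> m \<le> Max K"
    using Max_in by auto
  moreover have "Q < thr (Suc (Max K))" if "Max K < l"
    using above[of "Suc (Max K)"] that unfolding K_def by fastforce
  ultimately show ?thesis using that unfolding K_def by auto
qed

lemma steady_profileD:
  assumes "steady_profile l mu w lam c Q r x"
  shows "0 \<le> Q" and "Q < Qb \<Longrightarrow> r = lam" and "Q = Qb \<Longrightarrow> r \<le> lam"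
    and "Qb < Q \<Longrightarrow> r = 0" and "r = (\<Sum>i\<in>{1..l}. x i)"
    and "1 \<le> i \<Longrightarrow> i \<le> l \<Longrightarrow> Q < thr i \<Longrightarrow> x i = 0"
    and "1 \<le> i \<Longrightarrow> i \<le> l \<Longrightarrow> thr i < Q \<Longrightarrow> x i = mu i"
    and "1 \<le> i \<Longrightarrow> i \<le> l \<Longrightarrow> 0 \<le> x i \<and> x i \<le> mu i"
  using assms mu_pos[of i] unfolding steady_profile_def
  by (auto intro: less_imp_le)

lemma profile_rate_le_total:
  assumes "steady_profile l mu w lam c Q r x"
  shows "r \<le> cum (Suc l)"
proof -
  have "r = (\<Sum>i\<in>{1..l}. x i)" using steady_profileD(5)[OF assms] .
  also have "\<dots> \<le> (\<Sum>i\<in>{1..l}. mu i)"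
    by (rule sum_mono) (use steady_profileD(8)[OF assms] in auto)
  finally show ?thesis by (simp only: total_rate_eq_cum)
qed

text \<open>Beyond \<open>Qbar\<close> nobody joins, yet the trip to destination 1 is dispatched at full rate.\<close>
lemma profile_le_Qbar:
  assumes P: "steady_profile l mu w lam c Q r x"
  shows "Q \<le> Qb"
proof (rule ccontr)
  assume "\<not> Q \<le> Qb"
  then have "r = 0" and "thr 1 < Q"
    using steady_profileD(4)[OF P] thr_le_Qbar[of 1] l_pos by auto
  then have "x 1 = mu 1" "0 < mu 1"
    using steady_profileD(7)[OF P] mu_pos l_pos by auto
  moreover have "x 1 \<le> r"
    unfolding steady_profileD(5)[OF P]
    by (rule member_le_sum) (use steady_profileD(8)[OF P] l_pos in auto)
  ultimately show False using \<open>r = 0\<close> by simp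
qed

lemma profile_rate_le_arrival:
  assumes "steady_profile l mu w lam c Q r x"
  shows "r \<le> lam"
  using profile_le_Qbar[OF assms] steady_profileD(2,3)[OF assms] by fastforce

lemma profile_rate_bracket:
  assumes P: "steady_profile l mu w lam c Q r x"
    and k: "1 \<le> k" "k \<le> l" "thr k \<le> Q" "k < l \<Longrightarrow> Q < thr (Suc k)"
  shows "r = cum k + x k"
proof -
  have "r = (\<Sum>m\<in>{1..<Suc l}. x m)"
    using steady_profileD(5)[OF P] by (simp add: atLeastLessThanSuc_atLeastAtMost)
  also have "\<dots> = (\<Sum>m\<in>{1..<k}. x m) + x k + (\<Sum>m\<in>{Suc k..<Suc l}. x m)"
    using k sum.atLeastLessThan_concat[of 1 k "Suc l" x] sum.atLeast_Suc_lessThan[of k "Suc l" x]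
    by simp
  also have "(\<Sum>m\<in>{1..<k}. x m) = cum k"
    using thr_strict_mono[of _ k] k by (intro sum.cong refl steady_profileD(7)[OF P]) force+
  also have "(\<Sum>m\<in>{Suc k..<Suc l}. x m) = 0"
    using thr_mono[of "Suc k"] k by (intro sum.neutral ballI steady_profileD(6)[OF P]) force+
  finally show ?thesis by simp
qed

subsection \<open>Waiting times\<close>

lemma drift_speed_eq:
  assumes P: "steady_profile l mu w lam c Q r x"
    and k: "1 \<le> k" "k \<le> l" "thr k < q" "q \<le> Q" "k < l \<Longrightarrow> q \<le> thr (Suc k)"
  shows "drift_speed l mu w c x q = cum (Suc k)"
proof -
  have ahead: "{m\<in>{1..l}. thr m < q} = {1..<Suc k}"
  proof (intro set_eqI iffI)
    fix m assume m: "m \<in> {m\<in>{1..l}. thr m < q}"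
    show "m \<in> {1..<Suc k}"
    proof (rule ccontr)
      assume "m \<notin> {1..<Suc k}"
      then have "Suc k \<le> m" using m by auto
      then have "thr (Suc k) \<le> thr m" "q \<le> thr (Suc k)" using m k thr_mono[of "Suc k" m] by auto
      then show False using m by auto
    qed
  next
    fix m assume "m \<in> {1..<Suc k}"
    then show "m \<in> {m\<in>{1..l}. thr m < q}" using thr_mono[of m k] k by auto
  qed
  have "x m = mu m" if "m \<in> {1..<Suc k}" for m
    using that thr_mono[of m k] k by (intro steady_profileD(7)[OF P]) auto
  then show ?thesis unfolding drift_speed_def ahead by simp
qed

lemma travel_time_eq:
  assumes P: "steady_profile l mu w lam c Q r x"
    and k: "1 \<le> i" "i \<le> k" "k \<le> l" "thr k \<le> Q" "k < l \<Longrightarrow> Q \<le> thr (Suc k)"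
  shows "travel_time l mu w c x Q (thr i) = (w i - w k) / c + (Q - thr k) / cum (Suc k)"
proof -
  define t where "t m = (if m \<le> k then thr m else Q)" for m
  define f where "f q = 1 / drift_speed l mu w c x q" for q
  have mono: "t m \<le> t (Suc m)" if "i \<le> m" "m < Suc k" for m
    using that k thr_mono[of m "Suc m"] by (cases "m = k") (auto simp: t_def)
  have const: "f q = 1 / cum (Suc m)"
    if "i \<le> m" "m < Suc k" "t m < q" "q \<le> t (Suc m)" for m q
  proof -
    have "q \<le> Q" "m < l \<Longrightarrow> q \<le> thr (Suc m)"
    proof (atomize (full), cases "m = k")
      case True
      then show "q \<le> Q \<and> (m < l \<longrightarrow> q \<le> thr (Suc m))"
        using that k by (auto simp: t_def)
    next
      case False
      then show "q \<le> Q \<and> (m < l \<longrightarrow> q \<le> thr (Suc m))"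
        using that k thr_mono[of "Suc m" k] by (auto simp: t_def)
    qed
    moreover have "thr m < q" using that by (simp add: t_def)
    ultimately show ?thesis
      using drift_speed_eq[OF P, of m q] that k by (simp add: f_def)
  qed
  have "(f has_integral (\<Sum>m\<in>{i..<Suc k}. (t (Suc m) - t m) * (1 / cum (Suc m))))
      {t i..t (Suc k)}"
    using k by (intro has_integral_piecewise_constant mono const) auto
  moreover have "t i = thr i" "t (Suc k) = Q" using k by (auto simp: t_def)
  moreover have "(\<Sum>m\<in>{i..<Suc k}. (t (Suc m) - t m) * (1 / cum (Suc m)))
      = (\<Sum>m\<in>{i..<k}. (thr (Suc m) - thr m) / cum (Suc m)) + (Q - thr k) / cum (Suc k)"
    using k by (simp add: t_def)
  ultimately have "travel_time l mu w c x Q (thr i)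
      = (\<Sum>m\<in>{i..<k}. (thr (Suc m) - thr m) / cum (Suc m)) + (Q - thr k) / cum (Suc k)"
    unfolding travel_time_def f_def[symmetric] by (simp add: integral_unique)
  also have "(\<Sum>m\<in>{i..<k}. (thr (Suc m) - thr m) / cum (Suc m)) = (\<Sum>m\<in>{i..<k}. (w m - w (Suc m)) / c)"
  proof (rule sum.cong[OF refl])
    fix m assume "m \<in> {i..<k}"
    then have "0 < cum (Suc m)" using cum_Suc_pos[of m] k by auto
    then show "(thr (Suc m) - thr m) / cum (Suc m) = (w m - w (Suc m)) / c"
      using c_pos by (simp add: thr_Suc)
  qed
  also have "\<dots> = (w i - w k) / c"
    using sum_Suc_diff'[of i k "\<lambda>m. - w m"] k by (simp flip: sum_divide_distrib)
  finally show ?thesis .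
qed

lemma jstar_eqI:
  assumes k: "1 \<le> k" "k \<le> l" "cum k < lam" "k < l \<Longrightarrow> lam \<le> cum (Suc k)"
  shows "jstar l mu lam = k"
  unfolding jstar_def
proof (rule Max_eqI)
  fix y assume y: "y \<in> {i\<in>{1..l}. cum i < lam}"
  show "y \<le> k"
  proof (rule ccontr)
    assume "\<not> y \<le> k"
    then have "cum (Suc k) \<le> cum y" "k < l" using y cum_mono[of "Suc k" y] by auto
    then show False using y k by auto
  qed
qed (use k in auto)

lemma jstar_bracket:
  assumes "0 < lam" "lam \<le> cum (Suc l)"
  shows "1 \<le> jstar l mu lam" "jstar l mu lam \<le> l" "cum (jstar l mu lam) < lam"
    and "lam \<le> cum (Suc (jstar l mu lam))"
proof -
  define A where "A = {i\<in>{1..l}. cum i < lam}"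
  have "finite A" "1 \<in> A" unfolding A_def using l_pos assms(1) by auto
  then have j: "jstar l mu lam \<in> A" and above: "\<And>m. m \<in> A \<Longrightarrow> m \<le> jstar l mu lam"
    unfolding jstar_def A_def[symmetric] using Max_in by auto
  then show "1 \<le> jstar l mu lam" "jstar l mu lam \<le> l" "cum (jstar l mu lam) < lam"
    unfolding A_def by auto
  show "lam \<le> cum (Suc (jstar l mu lam))"
  proof (cases "jstar l mu lam < l")
    case True
    then show ?thesis using above[of "Suc (jstar l mu lam)"] j unfolding A_def by fastforce
  next
    case False
    then show ?thesis using j assms(2) unfolding A_def by auto
  qed
qed

subsection \<open>Oversupply of drivers\<close>

lemma full_dispatch_profile:
  assumes "cum (Suc l) \<le> lam"
  shows "steady_profile l mu w lam c Qb (cum (Suc l)) mu"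
proof -
  have "0 \<le> Qb" using thr_le_Qbar[of 1] thr_one l_pos by simp
  moreover have "0 \<le> cum (Suc l)" using cum_Suc_pos[of l] l_pos by simp
  moreover have "\<not> Qb < thr i \<and> 0 \<le> mu i" if "i \<in> {1..l}" for i
    using that thr_le_Qbar[of i] mu_pos[of i] by auto
  ultimately show ?thesis
    using assms unfolding steady_profile_def total_rate_eq_cum by auto
qed

lemma oversupply_steady_length:
  assumes "cum (Suc l) < lam" and P: "steady_profile l mu w lam c Q r x"
  shows "Q = Qb"
  using profile_le_Qbar[OF P] steady_profileD(2)[OF P] profile_rate_le_total[OF P] assms(1)
  by fastforce

lemma oversupply_payoff:
  assumes "cum (Suc l) < lam" and P: "steady_profile l mu w lam c Qb r x"
  shows "all_payoff l mu w lam c Qb r x 0"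
proof -
  have "travel_time l mu w c x Qb (thr i) = w i / c" if "1 \<le> i" "i \<le> l" for i
  proof -
    have "travel_time l mu w c x Qb (thr i) = (w i - w l) / c + (Qb - thr l) / cum (Suc l)"
      using that thr_le_Qbar[of l] by (intro travel_time_eq[OF P]) auto
    then show ?thesis
      using Qbar_minus_thr_last cum_Suc_pos[of l] l_pos by (simp add: diff_divide_distrib)
  qed
  then show ?thesis
    using c_pos profile_rate_le_total[OF P] assms(1) unfolding all_payoff_def by auto
qed

subsection \<open>Undersupply of drivers\<close>

lemma threshold_profile:
  assumes k: "1 \<le> k" "k \<le> l" "cum k < lam" "lam \<le> cum (Suc k)"
  shows "\<exists>x. steady_profile l mu w lam c (thr k) lam x \<and> (\<forall>i\<in>{1..l}. i < k \<longrightarrow> x i = mu i) \<and>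
    x k = lam - cum k \<and> (\<forall>i\<in>{1..l}. k < i \<longrightarrow> x i = 0)"
proof -
  define x where "x m = (if m < k then mu m else if m = k then lam - cum k else 0)" for m
  have "(\<Sum>m\<in>{1..l}. x m) = (\<Sum>m\<in>{1..<k}. x m) + x k + (\<Sum>m\<in>{Suc k..<Suc l}. x m)"
    using k sum.atLeastLessThan_concat[of 1 k "Suc l" x] sum.atLeast_Suc_lessThan[of k "Suc l" x]
    by (simp add: atLeastLessThanSuc_atLeastAtMost)
  also have "\<dots> = lam" by (simp add: x_def)
  finally have "(\<Sum>m\<in>{1..l}. x m) = lam" .
  moreover have "0 \<le> thr k" "\<not> Qb < thr k" "0 \<le> lam"
    using k thr_mono[of 1 k] thr_one thr_le_Qbar[of k] cum_mono[of 1 k] by auto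
  moreover have "(thr k < thr i \<longrightarrow> x i = 0) \<and> (thr i < thr k \<longrightarrow> x i = mu i) \<and>
      (thr k = thr i \<longrightarrow> 0 \<le> x i \<and> x i \<le> mu i)" if "1 \<le> i" "i \<le> l" for i
  proof (cases i k rule: linorder_cases)
    case less
    then show ?thesis using thr_strict_mono[of i k] that k by (simp add: x_def)
  next
    case equal
    then show ?thesis using k cum_Suc[of k] by (simp add: x_def)
  next
    case greater
    then show ?thesis using thr_strict_mono[of k i] that k by (simp add: x_def)
  qed
  ultimately have "steady_profile l mu w lam c (thr k) lam x"
    unfolding steady_profile_def by auto
  then show ?thesis by (auto simp: x_def)
qed

lemma undersupply_steady_length:
  assumes "0 < lam" "lam \<le> cum (Suc l)" and gap: "\<And>i. 1 \<le> i \<Longrightarrow> i \<le> l \<Longrightarrow> lam \<noteq> cum (Suc i)"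
    and P: "steady_profile l mu w lam c Q r x"
  shows "Q = thr (jstar l mu lam)"
proof -
  obtain k where k: "1 \<le> k" "k \<le> l" "thr k \<le> Q" "k < l \<Longrightarrow> Q < thr (Suc k)"
    using thr_bracket steady_profileD(1)[OF P] by blast
  have r: "r = cum k + x k" by (rule profile_rate_bracket[OF P k])
  have "Q = thr k"
  proof (rule ccontr)
    assume "Q \<noteq> thr k"
    then have "r = cum (Suc k)"
      using r k steady_profileD(7)[OF P] cum_Suc[of k] by simp
    moreover have "k = l" if "Q = Qb"
      using k thr_le_Qbar[of "Suc k"] that by (cases "k < l") auto
    ultimately have "lam = cum (Suc k)"
      using steady_profileD(2,3)[OF P] profile_le_Qbar[OF P] assms(2) by fastforce
    then show False using gap[OF k(1,2)] by simp
  qed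
  moreover have "lam \<noteq> cum k"
    using gap[of "k - 1"] k assms(1) by (cases "k = 1") auto
  moreover have "lam = r" if "k < l"
    using steady_profileD(2)[OF P] thr_less_Qbar[of k] k that \<open>Q = thr k\<close> by simp
  ultimately have "jstar l mu lam = k"
    using k r profile_rate_le_arrival[OF P] steady_profileD(8)[OF P, of k] cum_Suc[of k]
    by (intro jstar_eqI) auto
  then show ?thesis using \<open>Q = thr k\<close> by simp
qed

text \<open>If some drivers stay out, the queue must sit at \<open>Qbar\<close>, which forces \<open>k = l\<close> and \<open>w l = 0\<close>.\<close>
lemma threshold_payoff:
  assumes k: "1 \<le> k" "k \<le> l" and P: "steady_profile l mu w lam c (thr k) r x"
  shows "all_payoff l mu w lam c (thr k) r x (w k)"
proof -
  have "w i - c * travel_time l mu w c x (thr k) (thr i) = w k" if "1 \<le> i" "i \<le> l" "0 < x i" for i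
  proof -
    have "i \<le> k"
      using that k thr_strict_mono[of k i] steady_profileD(6)[OF P, of i] by (cases "k < i") auto
    then have "travel_time l mu w c x (thr k) (thr i) = (w i - w k) / c"
      using that k thr_mono[of k "Suc k"] by (subst travel_time_eq[OF P]) auto
    then show ?thesis using c_pos by simp
  qed
  moreover have "w k = 0" if "r < lam"
  proof -
    have "thr k = Qb"
      using that steady_profileD(2)[OF P] profile_le_Qbar[OF P] by fastforce
    then have "k = l" using thr_less_Qbar[of k] k by fastforce
    then show ?thesis
      using \<open>thr k = Qb\<close> Qbar_minus_thr_last cum_Suc_pos[of l] l_pos c_pos by simp
  qed
  ultimately show ?thesis unfolding all_payoff_def by auto
qed

end

theorem mainTheorem6:
  fixes l :: nat and mu w :: "nat \<Rightarrow> real" and lam c :: real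
  assumes "l \<ge> 1"
    and "\<forall>i\<in>{1..l}. mu i > 0"
    and "lam > 0" and "c > 0"
    and "\<forall>i j. 1 \<le> i \<longrightarrow> i < j \<longrightarrow> j \<le> l \<longrightarrow> w j < w i"
    and "w l \<ge> 0"
  shows
   "(lam > (\<Sum>i\<in>{1..l}. mu i) \<longrightarrow>
       (\<forall>Q. steady_length l mu w lam c Q \<longleftrightarrow> Q = Qbar l mu w c) \<and>
       (\<exists>r x. steady_profile l mu w lam c (Qbar l mu w c) r x \<and> (\<forall>i\<in>{1..l}. x i = mu i)) \<and>
       (\<forall>r x. steady_profile l mu w lam c (Qbar l mu w c) r x \<longrightarrow>
              all_payoff l mu w lam c (Qbar l mu w c) r x 0))
    \<and>
    (lam \<le> (\<Sum>i\<in>{1..l}. mu i) \<longrightarrow>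
       steady_length l mu w lam c (nthr mu w c (jstar l mu lam)) \<and>
       ((\<forall>i\<in>{1..l}. lam \<noteq> (\<Sum>j\<in>{1..i}. mu j)) \<longrightarrow>
          (\<forall>Q. steady_length l mu w lam c Q \<longrightarrow> Q = nthr mu w c (jstar l mu lam))) \<and>
       (\<exists>r x. steady_profile l mu w lam c (nthr mu w c (jstar l mu lam)) r x \<and>
          (\<forall>i\<in>{1..l}. i < jstar l mu lam \<longrightarrow> x i = mu i) \<and>
          x (jstar l mu lam) = lam - (\<Sum>i\<in>{1..<jstar l mu lam}. mu i) \<and>
          (\<forall>i\<in>{1..l}. jstar l mu lam < i \<longrightarrow> x i = 0)) \<and>
       (\<forall>r x. steady_profile l mu w lam c (nthr mu w c (jstar l mu lam)) r x \<longrightarrow>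
              all_payoff l mu w lam c (nthr mu w c (jstar l mu lam)) r x (w (jstar l mu lam))))"
proof -
  interpret fifo_market l mu w c using assms by unfold_locales auto
  let ?j = "jstar l mu lam"
  have over: "(\<forall>Q. steady_length l mu w lam c Q \<longleftrightarrow> Q = Qb) \<and>
      (\<exists>r x. steady_profile l mu w lam c Qb r x \<and> (\<forall>i\<in>{1..l}. x i = mu i)) \<and>
      (\<forall>r x. steady_profile l mu w lam c Qb r x \<longrightarrow> all_payoff l mu w lam c Qb r x 0)"
    if gt: "cum (Suc l) < lam"
  proof -
    have "steady_profile l mu w lam c Qb (cum (Suc l)) mu"
      using full_dispatch_profile gt by simp
    then show ?thesis
      using oversupply_steady_length[OF gt] oversupply_payoff[OF gt]
      unfolding steady_length_def by blast
  qed
  have under: "steady_length l mu w lam c (thr ?j) \<and>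
      ((\<forall>i\<in>{1..l}. lam \<noteq> (\<Sum>j\<in>{1..i}. mu j)) \<longrightarrow>
        (\<forall>Q. steady_length l mu w lam c Q \<longrightarrow> Q = thr ?j)) \<and>
      (\<exists>r x. steady_profile l mu w lam c (thr ?j) r x \<and> (\<forall>i\<in>{1..l}. i < ?j \<longrightarrow> x i = mu i) \<and>
        x ?j = lam - cum ?j \<and> (\<forall>i\<in>{1..l}. ?j < i \<longrightarrow> x i = 0)) \<and>
      (\<forall>r x. steady_profile l mu w lam c (thr ?j) r x \<longrightarrow>
        all_payoff l mu w lam c (thr ?j) r x (w ?j))"
    if le: "lam \<le> cum (Suc l)"
  proof -
    note j = jstar_bracket[OF \<open>0 < lam\<close> le]
    obtain x where "steady_profile l mu w lam c (thr ?j) lam x"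
        "\<forall>i\<in>{1..l}. i < ?j \<longrightarrow> x i = mu i" "x ?j = lam - cum ?j"
        "\<forall>i\<in>{1..l}. ?j < i \<longrightarrow> x i = 0"
      using threshold_profile[OF j] by blast
    moreover have "Q = thr ?j"
      if "\<forall>i\<in>{1..l}. lam \<noteq> (\<Sum>j\<in>{1..i}. mu j)" "steady_length l mu w lam c Q" for Q
      using that undersupply_steady_length[OF \<open>0 < lam\<close> le]
      unfolding steady_length_def atLeastLessThanSuc_atLeastAtMost by (meson atLeastAtMost_iff)
    ultimately show ?thesis
      using threshold_payoff[OF j(1,2)] unfolding steady_length_def by blast
  qed
  show ?thesis
    unfolding total_rate_eq_cum using over under by (simp add: not_less)
qed

end
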